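(* Let $\mathscr{F}$ be a family of languages closed under rational transduction and Kleene closure, and let $S$ be a finitely generated completely simple semigroup. Then the following are equivalent: (i) the loop problem of $S$ (with respect to a finite semigroup choice of generators) belongs to $\mathscr{F}$; (ii) the loop problem of each maximal subgroup of $S$ (with respect to a finite choice of generators) belongs to $\mathscr{F}$; (iii) the word problem of each maximal subgroup of $S$ (with respect to a finite choice of monoid generators) belongs to $\mathscr{F}$.
   Context: Maps are written on the right. $X^*$, $X^+$: free monoid and free semigroup on $X$. A semigroup is completely simple if it has no proper ideals and has a primitive idempotent (idempotent $e$ such that every idempotent $f$ with $ef = fe = f$ equals $e$); maximal subgroups are subsemigroups that are groups under the inherited multiplication and contained in no larger such; in a finitely generated completely simple semigroup they are finitely generated. For a monoid $M$ and surjective morphism $\sigma : X^* \to M$ ($X$ finite), let $\overline{X} = \{\overline{x} : x \in X\}$ be new symbols, $\hat{X} = X \cup \overline{X}$; the loop automaton has vertex set $M$, for each $a \in M$, $x \in X$ an edge $a \to a(x\sigma)$ labelled $x$ and an edge $a(x\sigma) \to a$ labelled $\overline{x}$; the loop problem $L_\sigma(M) \subseteq \hat{X}^*$ is the set of labels of paths from the identity to the identity. For a semigroup $S$ and surjective $\sigma : X^+ \to S$, the loop problem of $S$ is the loop problem of $S^1$ ($S$ with a new identity adjoined even if one exists) with respect to the extension $X^* \to S^1$. The word problem of a group $G$ with respect to a surjective monoid morphism $\sigma : X^* \to G$ is $\{w \in X^* : w\sigma = 1\}$. A rational transduction is a relation $\rho \subseteq X^* \times Z^*$ ($X, Z$ finite)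 accepted by a finite directed graph with edges labelled in $X^* \times Z^*$, an initial vertex and terminal vertices (pairs labelling initial-to-terminal paths); the image of $L$ is $L\rho = \{v : (u,v)\in\rho, u \in L\}$. The Kleene closure of a language is the submonoid of the free monoid it generates. *)

theory Defs
  imports Main
begin

inductive tpath :: "(nat \<times> nat list \<times> nat list \<times> nat) set \<Rightarrow> nat \<Rightarrow> nat list \<Rightarrow> nat list \<Rightarrow> nat \<Rightarrow> bool"
  for E where
  tpath_nil: "tpath E q [] [] q"
| tpath_step: "(p, a, b, q) \<in> E \<Longrightarrow> tpath E q u v r \<Longrightarrow> tpath E p (a @ u) (b @ v) r"

definition rational_transduction :: "nat set \<Rightarrow> nat set \<Rightarrow> (nat list \<times> nat list) set \<Rightarrow> bool" where
  "rational_transduction X Z \<rho> \<longleftrightarrow>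
     (\<exists>E q0 T. finite E \<and> (\<forall>(p, a, b, q) \<in> E. set a \<subseteq> X \<and> set b \<subseteq> Z) \<and>
        \<rho> = {(u, v). \<exists>t \<in> T. tpath E q0 u v t})"

definition closed_rat_trans :: "nat list set set \<Rightarrow> bool" where
  "closed_rat_trans F \<longleftrightarrow>
     (\<forall>X Z L \<rho>. finite X \<and> finite Z \<and> L \<in> F \<and> L \<subseteq> lists X \<and> rational_transduction X Z \<rho>
        \<longrightarrow> \<rho> `` L \<in> F)"

definition kleene_star :: "nat list set \<Rightarrow> nat list set" where
  "kleene_star L = {concat ws | ws. set ws \<subseteq> L}"

definition closed_kleene :: "nat list set set \<Rightarrow> bool" where
  "closed_kleene F \<longleftrightarrow> (\<forall>L \<in> F. kleene_star L \<in> F)"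

definition mon_eval :: "('m \<Rightarrow> 'm \<Rightarrow> 'm) \<Rightarrow> 'm \<Rightarrow> (nat \<Rightarrow> 'm) \<Rightarrow> nat list \<Rightarrow> 'm" where
  "mon_eval mult one g w = foldr (\<lambda>x acc. mult (g x) acc) w one"

definition mon_generates :: "'m set \<Rightarrow> ('m \<Rightarrow> 'm \<Rightarrow> 'm) \<Rightarrow> 'm \<Rightarrow> nat set \<Rightarrow> (nat \<Rightarrow> 'm) \<Rightarrow> bool" where
  "mon_generates M mult one X g \<longleftrightarrow>
     finite X \<and> g ` X \<subseteq> M \<and> (\<forall>m \<in> M. \<exists>w. set w \<subseteq> X \<and> mon_eval mult one g w = m)"

text \<open>Loop automaton. Encoding of the alphabet \<open>X \<union> \<overline>X\<close>: the letter x is the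
symbol 2x and the letter \<overline>x is the symbol 2x+1.\<close>
inductive loop_path :: "'m set \<Rightarrow> ('m \<Rightarrow> 'm \<Rightarrow> 'm) \<Rightarrow> nat set \<Rightarrow> (nat \<Rightarrow> 'm) \<Rightarrow> 'm \<Rightarrow> nat list \<Rightarrow> 'm \<Rightarrow> bool"
  for M mult X g where
  lp_nil: "a \<in> M \<Longrightarrow> loop_path M mult X g a [] a"
| lp_fwd: "a \<in> M \<Longrightarrow> x \<in> X \<Longrightarrow> loop_path M mult X g (mult a (g x)) w b
            \<Longrightarrow> loop_path M mult X g a ((2 * x) # w) b"
| lp_bwd: "a \<in> M \<Longrightarrow> x \<in> X \<Longrightarrow> c \<in> M \<Longrightarrow> mult c (g x) = a \<Longrightarrow> loop_path M mult X g c w b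
            \<Longrightarrow> loop_path M mult X g a ((2 * x + 1) # w) b"

definition loop_problem :: "'m set \<Rightarrow> ('m \<Rightarrow> 'm \<Rightarrow> 'm) \<Rightarrow> 'm \<Rightarrow> nat set \<Rightarrow> (nat \<Rightarrow> 'm) \<Rightarrow> nat list set" where
  "loop_problem M mult one X g = {w. loop_path M mult X g one w one}"

definition word_problem :: "('m \<Rightarrow> 'm \<Rightarrow> 'm) \<Rightarrow> 'm \<Rightarrow> nat set \<Rightarrow> (nat \<Rightarrow> 'm) \<Rightarrow> nat list set" where
  "word_problem mult one X g = {w. set w \<subseteq> X \<and> mon_eval mult one g w = one}"

text \<open>S^1 = S with a new identity (None) adjoined.\<close>
fun adj_mult :: "'a::semigroup_mult option \<Rightarrow> 'a option \<Rightarrow> 'a option" where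
  "adj_mult None b = b"
| "adj_mult (Some a) None = Some a"
| "adj_mult (Some a) (Some b) = Some (a * b)"

definition sg_generates :: "nat set \<Rightarrow> (nat \<Rightarrow> 'a::semigroup_mult) \<Rightarrow> bool" where
  "sg_generates X g \<longleftrightarrow> finite X \<and>
     (\<forall>s::'a. \<exists>w. w \<noteq> [] \<and> set w \<subseteq> X \<and> mon_eval adj_mult None (Some \<circ> g) w = Some s)"

definition finitely_generated :: "'a::semigroup_mult itself \<Rightarrow> bool" where
  "finitely_generated T \<longleftrightarrow> (\<exists>X (g :: nat \<Rightarrow> 'a). sg_generates X g)"

definition sg_ideal :: "'a::semigroup_mult set \<Rightarrow> bool" where
  "sg_ideal I \<longleftrightarrow> I \<noteq> {} \<and> (\<forall>s i. i \<in> I \<longrightarrow> s * i \<in> I \<and> i * s \<in> I)"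

definition primitive_idempotent :: "'a::semigroup_mult \<Rightarrow> bool" where
  "primitive_idempotent e \<longleftrightarrow> e * e = e \<and>
     (\<forall>f. f * f = f \<and> e * f = f \<and> f * e = f \<longrightarrow> f = e)"

definition completely_simple :: "'a::semigroup_mult itself \<Rightarrow> bool" where
  "completely_simple T \<longleftrightarrow>
     (\<forall>I :: 'a set. sg_ideal I \<longrightarrow> I = UNIV) \<and> (\<exists>e :: 'a. primitive_idempotent e)"

definition is_subgroup :: "'a::semigroup_mult set \<Rightarrow> bool" where
  "is_subgroup H \<longleftrightarrow> (\<forall>a \<in> H. \<forall>b \<in> H. a * b \<in> H) \<and>
     (\<exists>e \<in> H. \<forall>h \<in> H. e * h = h \<and> h * e = h \<and> (\<exists>h' \<in> H. h * h' = e \<and> h' * h = e))"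

definition maximal_subgroup :: "'a::semigroup_mult set \<Rightarrow> bool" where
  "maximal_subgroup H \<longleftrightarrow> is_subgroup H \<and> (\<forall>K. is_subgroup K \<and> H \<subseteq> K \<longrightarrow> K = H)"

definition grp_one :: "'a::semigroup_mult set \<Rightarrow> 'a" where
  "grp_one H = (THE e. e \<in> H \<and> (\<forall>h \<in> H. e * h = h \<and> h * e = h))"

end

(*
  Fix an idempotent e. Its maximal subgroup is He = eSe, and every maximal subgroup arises this
  way. Every s factors as s = rho s * hcoord s * lam s with hcoord s in He, where rho (s * t) = rho s,
  lam (s * t) = lam t and hcoord (s * t) = hcoord s * (lam s * rho t) * hcoord t; this reduces
  computations in S to computations in He.

  (ii) <-> (iii): the word problem of a group is the image of its loop problem under the
  transduction reading only positive letters, and the loop problem is the image of the word problem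
  under the transduction replacing each inverse letter by a word for the inverse.

  (i) -> (iii): He is generated by the finitely many elements hcoord (g x) and lam (g x) * rho (g y).
  Writing each of them as a word of S and interleaving with a word for e maps a word over these
  generators to a path of S^1 that returns to the identity iff the word represents e.

  (iii) -> (i): the loop problem of S^1 is the Kleene closure of the first-return loops
  x w y-bar, and these form the image of the word problem of He under a transducer whose states
  track rho and lam of the current element while its input spells out the He-coordinate.
*)
theory Submission
  imports Defs "HOL-Library.Nat_Bijection"
begin

definition hat_alphabet :: "nat set \<Rightarrow> nat set" where
  "hat_alphabet X = (\<lambda>x. 2 * x) ` X \<union> (\<lambda>x. 2 * x + 1) ` X"

lemma finite_hat_alphabet: "finite X \<Longrightarrow> finite (hat_alphabet X)"
  unfolding hat_alphabet_def by simp

lemma double_in_hat_alphabet [simp]: "2 * x \<in> hat_alphabet X \<longleftrightarrow> x \<in> X"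
  unfolding hat_alphabet_def by (auto; presburger)

lemma Suc_double_in_hat_alphabet [simp]: "Suc (2 * x) \<in> hat_alphabet X \<longleftrightarrow> x \<in> X"
  unfolding hat_alphabet_def by (auto; presburger)

lemma hat_alphabet_cases:
  assumes "c \<in> hat_alphabet X"
  obtains x where "x \<in> X" "c = 2 * x" | x where "x \<in> X" "c = Suc (2 * x)"
  using assms unfolding hat_alphabet_def by auto

lemma hat_alphabet_div2: "c \<in> hat_alphabet X \<Longrightarrow> c div 2 \<in> X"
  by (erule hat_alphabet_cases) auto

lemma double_neq_Suc_double [simp]:
  "2 * (x::nat) \<noteq> Suc (2 * y)" "Suc (2 * x) \<noteq> 2 * y"
  by presburger+

lemma loop_path_Nil_iff: "loop_path M mult X g a [] b \<longleftrightarrow> a \<in> M \<and> b = a"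
  by (auto elim: loop_path.cases intro: loop_path.lp_nil)

lemma loop_path_fwd_iff:
  "loop_path M mult X g a (2 * x # w) b \<longleftrightarrow>
     a \<in> M \<and> x \<in> X \<and> loop_path M mult X g (mult a (g x)) w b"
  by (auto elim: loop_path.cases intro: loop_path.lp_fwd)

lemma loop_path_bwd_iff:
  "loop_path M mult X g a (Suc (2 * x) # w) b \<longleftrightarrow>
     a \<in> M \<and> x \<in> X \<and> (\<exists>c \<in> M. mult c (g x) = a \<and> loop_path M mult X g c w b)"
proof
  assume "loop_path M mult X g a (Suc (2 * x) # w) b"
  then show "a \<in> M \<and> x \<in> X \<and> (\<exists>c \<in> M. mult c (g x) = a \<and> loop_path M mult X g c w b)"
    by (cases rule: loop_path.cases) auto
qed (use loop_path.lp_bwd[of _ M x X _ mult g w b] in auto)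

lemma loop_path_hat_alphabet: "loop_path M mult X g a w b \<Longrightarrow> set w \<subseteq> hat_alphabet X"
  by (induction rule: loop_path.induct) auto

lemma loop_path_append_iff:
  "loop_path M mult X g a (u @ v) c \<longleftrightarrow>
     (\<exists>b. loop_path M mult X g a u b \<and> loop_path M mult X g b v c)"
proof (induction u arbitrary: a)
  case Nil
  then show ?case
    by (auto simp: loop_path_Nil_iff elim: loop_path.cases)
next
  case (Cons d u)
  show ?case
  proof (cases "even d")
    case True
    then obtain x where "d = 2 * x" by (metis evenE)
    then show ?thesis using Cons.IH by (auto simp: loop_path_fwd_iff)
  next
    case False
    then obtain x where "d = Suc (2 * x)" by (metis oddE Suc_eq_plus1)
    then show ?thesis using Cons.IH by (auto simp: loop_path_bwd_iff)
  qed
qed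

lemma tpath_final_state:
  assumes "\<And>a b q. (r, a, b, q) \<notin> E"
    and "tpath E r u v t"
  shows "u = [] \<and> v = [] \<and> t = r"
  using assms(2,1) by (induction rule: tpath.induct) auto

context
  fixes E :: "(nat \<times> nat list \<times> nat list \<times> nat) set"
    and P Q S R :: "nat list" and A B :: "'z \<Rightarrow> nat list" and Zs :: "'z set"
  assumes E_def: "E = {(0, P, Q, 1)} \<union> {(1, A z, B z, 1) | z. z \<in> Zs} \<union> {(1, S, R, 2)}"
begin

lemma tpath_bracketed_loop:
  "tpath E 1 u v 2 \<longleftrightarrow>
     (\<exists>zs. set zs \<subseteq> Zs \<and> u = concat (map A zs) @ S \<and> v = concat (map B zs) @ R)"
proof
  have "tpath E p u v r \<Longrightarrow> p = 1 \<Longrightarrow> r = 2 \<Longrightarrow>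
          \<exists>zs. set zs \<subseteq> Zs \<and> u = concat (map A zs) @ S \<and> v = concat (map B zs) @ R" for p u v r
  proof (induction rule: tpath.induct)
    case (tpath_step p a b q u v r)
    from tpath_step.hyps(1) tpath_step.prems
    consider z where "z \<in> Zs" "a = A z" "b = B z" "q = 1" | "a = S" "b = R" "q = 2"
      unfolding E_def by auto
    then show ?case
    proof cases
      case (1 z)
      then obtain zs where "set zs \<subseteq> Zs" "u = concat (map A zs) @ S" "v = concat (map B zs) @ R"
        using tpath_step.IH tpath_step.prems by blast
      with 1 show ?thesis by (intro exI[of _ "z # zs"]) auto
    next
      case 2
      have "u = [] \<and> v = []"
        using tpath_final_state[of 2 E] tpath_step.hyps(2) 2 unfolding E_def by auto
      with 2 show ?thesis by (intro exI[of _ "[]"]) auto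
    qed
  qed simp
  then show "tpath E 1 u v 2 \<Longrightarrow> \<exists>zs. set zs \<subseteq> Zs \<and> u = concat (map A zs) @ S \<and> v = concat (map B zs) @ R"
    by blast
next
  have "tpath E 1 S R 2"
    using tpath_step[OF _ tpath_nil, of 1 S R 2 E] unfolding E_def by auto
  then have "set zs \<subseteq> Zs \<Longrightarrow> tpath E 1 (concat (map A zs) @ S) (concat (map B zs) @ R) 2" for zs
  proof (induction zs)
    case (Cons z zs)
    then have "(1, A z, B z, 1) \<in> E" unfolding E_def by auto
    with Cons show ?case by (auto dest: tpath_step)
  qed simp
  then show "\<exists>zs. set zs \<subseteq> Zs \<and> u = concat (map A zs) @ S \<and> v = concat (map B zs) @ R \<Longrightarrow> tpath E 1 u v 2"
    by blast
qed

lemma tpath_bracketed: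
  "tpath E 0 u v 2 \<longleftrightarrow>
     (\<exists>zs. set zs \<subseteq> Zs \<and> u = P @ concat (map A zs) @ S \<and> v = Q @ concat (map B zs) @ R)"
proof
  assume "tpath E 0 u v 2"
  then show "\<exists>zs. set zs \<subseteq> Zs \<and> u = P @ concat (map A zs) @ S \<and> v = Q @ concat (map B zs) @ R"
  proof (cases rule: tpath.cases)
    case (tpath_step a b q u' v')
    then have "a = P" "b = Q" "q = 1" unfolding E_def by auto
    with tpath_step show ?thesis using tpath_bracketed_loop by auto
  qed simp
next
  assume "\<exists>zs. set zs \<subseteq> Zs \<and> u = P @ concat (map A zs) @ S \<and> v = Q @ concat (map B zs) @ R"
  then obtain zs where zs: "set zs \<subseteq> Zs" "u = P @ concat (map A zs) @ S" "v = Q @ concat (map B zs) @ R"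
    by blast
  then have "tpath E 1 (concat (map A zs) @ S) (concat (map B zs) @ R) 2"
    using tpath_bracketed_loop by blast
  moreover have "(0, P, Q, 1) \<in> E" unfolding E_def by simp
  ultimately show "tpath E 0 u v 2" using zs(2,3) tpath_step by fastforce
qed

end

lemma rational_transduction_bracketed:
  assumes "finite Zs" "set P \<subseteq> X" "set S \<subseteq> X" "set Q \<subseteq> Y" "set R \<subseteq> Y"
    and "\<And>z. z \<in> Zs \<Longrightarrow> set (A z) \<subseteq> X \<and> set (B z) \<subseteq> Y"
  shows "rational_transduction X Y
           {(P @ concat (map A zs) @ S, Q @ concat (map B zs) @ R) | zs. set zs \<subseteq> Zs}"
  unfolding rational_transduction_def
proof (intro exI conjI)
  define E :: "(nat \<times> nat list \<times> nat list \<times> nat) set"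
    where "E = {(0, P, Q, 1)} \<union> {(1, A z, B z, 1) | z. z \<in> Zs} \<union> {(1, S, R, 2)}"
  have "{(1::nat, A z, B z, 1::nat) | z. z \<in> Zs} = (\<lambda>z. (1, A z, B z, 1)) ` Zs" by auto
  then show "finite E" unfolding E_def using assms(1) by simp
  show "\<forall>(p, a, b, q) \<in> E. set a \<subseteq> X \<and> set b \<subseteq> Y" unfolding E_def using assms by blast
  show "{(P @ concat (map A zs) @ S, Q @ concat (map B zs) @ R) | zs. set zs \<subseteq> Zs} =
        {(u, v). \<exists>t \<in> {2}. tpath E 0 u v t}"
    using tpath_bracketed[of E P Q A B Zs S R] E_def by auto
qed

lemma closed_rat_transD:
  "closed_rat_trans F \<Longrightarrow> rational_transduction X Y \<rho> \<Longrightarrow> finite X \<Longrightarrow> finite Y \<Longrightarrow>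
     L \<in> F \<Longrightarrow> L \<subseteq> lists X \<Longrightarrow> \<rho> `` L \<in> F"
  unfolding closed_rat_trans_def by blast

lemma rational_transduction_star:
  assumes "finite Zs" "\<And>z. z \<in> Zs \<Longrightarrow> set (A z) \<subseteq> X \<and> set (B z) \<subseteq> Y"
  shows "rational_transduction X Y {(concat (map A zs), concat (map B zs)) | zs. set zs \<subseteq> Zs}"
  using rational_transduction_bracketed[OF assms(1) _ _ _ _ assms(2), of "[]" "[]" "[]" "[]"] by simp

lemma mon_eval_Nil [simp]: "mon_eval mult one g [] = one"
  and mon_eval_Cons [simp]: "mon_eval mult one g (x # w) = mult (g x) (mon_eval mult one g w)"
  unfolding mon_eval_def by simp_all

definition rep_word :: "('m \<Rightarrow> 'm \<Rightarrow> 'm) \<Rightarrow> 'm \<Rightarrow> nat set \<Rightarrow> (nat \<Rightarrow> 'm) \<Rightarrow> 'm \<Rightarrow> nat list" where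
  "rep_word mult one X g m = (SOME w. set w \<subseteq> X \<and> mon_eval mult one g w = m)"

lemma rep_word:
  assumes "mon_generates M mult one X g" "m \<in> M"
  shows "set (rep_word mult one X g m) \<subseteq> X" "mon_eval mult one g (rep_word mult one X g m) = m"
proof -
  have "\<exists>w. set w \<subseteq> X \<and> mon_eval mult one g w = m" using assms unfolding mon_generates_def by blast
  from someI_ex[OF this] show "set (rep_word mult one X g m) \<subseteq> X"
    "mon_eval mult one g (rep_word mult one X g m) = m" unfolding rep_word_def by auto
qed

section \<open>Completely simple semigroups and their maximal subgroups\<close>

lemma completely_simple_sandwich:
  assumes "completely_simple TYPE('a::semigroup_mult)"
  shows "\<exists>x y. (b::'a) = x * a * y"
proof -
  let ?I = "{x * a * y | x y. True}"
  have "sg_ideal ?I" unfolding sg_ideal_def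
  proof (intro conjI allI impI)
    fix s i assume "i \<in> ?I"
    then obtain x y where i: "i = x * a * y" by blast
    have "s * i = (s * x) * a * y" using i by (simp add: mult.assoc)
    then show "s * i \<in> ?I" by blast
    show "i * s \<in> ?I" using i by (auto simp: mult.assoc)
  qed blast
  with assms have "?I = UNIV" unfolding completely_simple_def by blast
  then show ?thesis by blast
qed

lemma completely_simple_primitive:
  assumes cs: "completely_simple TYPE('a::semigroup_mult)"
    and f: "(f::'a) * f = f" and f': "f' * f' = f'" and "f * f' = f'" and "f' * f = f'"
  shows "f' = f"
proof -
  obtain e0 :: 'a where pe: "primitive_idempotent e0" using cs unfolding completely_simple_def by blast
  have e0: "e0 * e0 = e0" using pe unfolding primitive_idempotent_def by blast
  have prim: "\<And>k. k * k = k \<Longrightarrow> e0 * k = k \<Longrightarrow> k * e0 = k \<Longrightarrow> k = e0"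
    using pe unfolding primitive_idempotent_def by blast
  obtain u v where uv: "f = u * e0 * v" using completely_simple_sandwich[OF cs] by blast
  define u' where "u' = f * u * e0"
  define v' where "v' = e0 * v * f"
  have e0l: "\<And>z. e0 * (e0 * z) = e0 * z" using e0 by (metis mult.assoc)
  have fl: "\<And>z. f * (f * z) = f * z" using f by (metis mult.assoc)
  have uv': "u' * v' = f"
    unfolding u'_def v'_def by (simp add: mult.assoc e0l) (metis uv f mult.assoc)
  have v'f: "v' * f = v'" unfolding v'_def using f by (simp add: mult.assoc)
  have u'e: "u' * e0 = u'" unfolding u'_def using e0 by (simp add: mult.assoc)
  have ev': "e0 * v' = v'" unfolding v'_def using e0l by (simp add: mult.assoc)
  \<comment> \<open>\<open>v' u'\<close> and \<open>v' f' u'\<close> are idempotents below \<open>e0\<close>, hence both equal \<open>e0\<close>\<close>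
  have k1: "v' * u' = e0"
  proof (rule prim)
    show "v' * u' * (v' * u') = v' * u'" by (metis mult.assoc uv' v'f)
    show "e0 * (v' * u') = v' * u'" by (metis mult.assoc ev')
    show "v' * u' * e0 = v' * u'" by (metis mult.assoc u'e)
  qed
  have k2: "v' * f' * u' = e0"
  proof (rule prim)
    have "f' * f * f' = f'" using assms(4,5) f' by (metis mult.assoc)
    then show "v' * f' * u' * (v' * f' * u') = v' * f' * u'" by (metis mult.assoc uv')
    show "e0 * (v' * f' * u') = v' * f' * u'" by (metis mult.assoc ev')
    show "v' * f' * u' * e0 = v' * f' * u'" by (metis mult.assoc u'e)
  qed
  have "f = u' * e0 * v'"
    by (metis k1 mult.assoc u'e uv' f)
  also have "\<dots> = u' * (v' * f' * u') * v'" using k2 by simp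
  also have "\<dots> = u' * v' * f' * (u' * v')" by (simp add: mult.assoc)
  also have "\<dots> = f'" using uv' assms(4,5) by (metis mult.assoc)
  finally show ?thesis by simp
qed

lemma grp_one_eqI:
  assumes "(e::'a::semigroup_mult) \<in> H" "\<forall>h\<in>H. e * h = h \<and> h * e = h"
  shows "grp_one H = e"
  unfolding grp_one_def
proof (rule the_equality)
  fix e' assume "e' \<in> H \<and> (\<forall>h\<in>H. e' * h = h \<and> h * e' = h)"
  then have "e' * e = e" "e' * e = e'" using assms by auto
  then show "e' = e" by simp
qed (use assms in blast)

locale cs_idempotent =
  fixes e :: "'a::semigroup_mult"
  assumes completely_simple: "completely_simple TYPE('a)"
    and idem: "e * e = e"
begin

definition He :: "'a set" where "He = {x. e * x * e = x}"

lemma e_mult_e_mult: "e * (e * z) = e * z"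
  using idem by (simp add: mult.assoc[symmetric])

lemma He_left [simp]:
  assumes "a \<in> He" shows "e * a = a"
proof -
  have "e * a = e * (e * a * e)" using assms unfolding He_def by simp
  also have "\<dots> = e * a * e" by (simp add: mult.assoc e_mult_e_mult)
  finally show ?thesis using assms unfolding He_def by simp
qed

lemma He_right [simp]:
  assumes "a \<in> He" shows "a * e = a"
proof -
  have "a * e = (e * a * e) * e" using assms unfolding He_def by simp
  also have "\<dots> = e * a * e" by (simp add: mult.assoc idem)
  finally show ?thesis using assms unfolding He_def by simp
qed

lemma e_in_He [simp]: "e \<in> He"
  unfolding He_def using idem by simp

lemma sandwich_in_He [simp]: "e * s * e \<in> He"
  unfolding He_def by (simp add: mult.assoc e_mult_e_mult idem)

lemma He_mult [simp]:
  assumes "a \<in> He" "b \<in> He" shows "a * b \<in> He"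
proof -
  have "e * (a * b) * e = (e * a) * (b * e)" by (simp add: mult.assoc)
  then show ?thesis using He_left[OF assms(1)] He_right[OF assms(2)] unfolding He_def by simp
qed

lemma He_left_assoc: "a \<in> He \<Longrightarrow> e * (a * z) = a * z"
  by (simp add: mult.assoc[symmetric])

lemma He_right_assoc: "a \<in> He \<Longrightarrow> a * (e * z) = a * z"
  by (simp add: mult.assoc[symmetric])

lemma He_inverse_ex:
  assumes a: "a \<in> He"
  shows "\<exists>b \<in> He. a * b = e \<and> b * a = e"
proof -
  obtain x y where xy: "x * a * y = e"
    using completely_simple_sandwich[OF completely_simple] by metis
  define u where "u = e * x * e"
  define v where "v = e * y * e"
  have u: "u \<in> He" and v: "v \<in> He" unfolding u_def v_def by simp_all
  have uav: "u * (a * (v * z)) = e * z" for z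
  proof -
    have "u * (a * (v * z)) = e * (x * a * y) * (e * z)"
      unfolding u_def v_def using a by (simp add: mult.assoc He_left_assoc He_right_assoc)
    then show ?thesis using xy by (simp add: e_mult_e_mult)
  qed
  \<comment> \<open>\<open>a v u\<close> and \<open>v u a\<close> are idempotents below \<open>e\<close>\<close>
  have "a * v * u = e"
    by (rule completely_simple_primitive[OF completely_simple idem])
      (use a u v uav in \<open>simp_all add: mult.assoc He_left_assoc He_right_assoc\<close>)
  moreover have "v * u * a = e"
    by (rule completely_simple_primitive[OF completely_simple idem])
      (use a u v uav in \<open>simp_all add: mult.assoc He_left_assoc He_right_assoc\<close>)
  ultimately show ?thesis using u v by (intro bexI[of _ "v * u"]) (simp_all add: mult.assoc)
qed

definition hinv :: "'a \<Rightarrow> 'a" where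
  "hinv a = (SOME b. b \<in> He \<and> a * b = e \<and> b * a = e)"

lemma
  assumes "a \<in> He"
  shows hinv_in_He [simp]: "hinv a \<in> He"
    and mult_hinv [simp]: "a * hinv a = e"
    and hinv_mult [simp]: "hinv a * a = e"
  using someI_ex[OF He_inverse_ex[OF assms, unfolded Bex_def]] unfolding hinv_def by auto

lemma hinv_unique:
  assumes "a \<in> He" "b \<in> He" "a * b = e"
  shows "hinv a = b"
proof -
  have "hinv a = hinv a * (a * b)" using assms by simp
  also have "\<dots> = b" using assms(1,2) by (simp add: mult.assoc[symmetric])
  finally show ?thesis .
qed

lemma mult_hinv_assoc: "a \<in> He \<Longrightarrow> a * (hinv a * z) = e * z"
  by (simp add: mult.assoc[symmetric])

lemma hinv_mult_assoc: "a \<in> He \<Longrightarrow> hinv a * (a * z) = e * z"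
  by (simp add: mult.assoc[symmetric])

lemma hinv_mult_distrib: "a \<in> He \<Longrightarrow> b \<in> He \<Longrightarrow> hinv (a * b) = hinv b * hinv a"
  by (rule hinv_unique) (simp_all add: mult.assoc mult_hinv_assoc)

lemma mult_hinv_eq_e_iff: "a \<in> He \<Longrightarrow> b \<in> He \<Longrightarrow> a * hinv b = e \<longleftrightarrow> a = b"
  by (metis He_right hinv_in_He hinv_mult hinv_unique mult.assoc mult_hinv)

lemma is_subgroup_He: "is_subgroup He"
proof -
  have "\<exists>h' \<in> He. h * h' = e \<and> h' * h = e" if "h \<in> He" for h
    using that by (intro bexI[of _ "hinv h"]) simp_all
  then show ?thesis unfolding is_subgroup_def by (intro conjI bexI[of _ e]) auto
qed

lemma grp_one_He: "grp_one He = e"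
  by (rule grp_one_eqI) auto

lemma maximal_subgroup_He: "maximal_subgroup He"
  unfolding maximal_subgroup_def
proof (intro conjI allI impI is_subgroup_He)
  fix K assume K: "is_subgroup K \<and> He \<subseteq> K"
  then obtain e' where e': "e' \<in> K" "\<forall>h\<in>K. e' * h = h \<and> h * e' = h"
    unfolding is_subgroup_def by blast
  have "e \<in> K" using K by auto
  then have "e = e'"
    using e' completely_simple_primitive[OF completely_simple, of e' e] idem by auto
  then have "K \<subseteq> He" using e' unfolding He_def by auto
  then show "K = He" using K by blast
qed

end

lemma maximal_subgroup_eq_He:
  assumes cs: "completely_simple TYPE('a::semigroup_mult)" and m: "maximal_subgroup (H::'a set)"
  shows "cs_idempotent (grp_one H)" and "H = cs_idempotent.He (grp_one H)"
proof -
  from m obtain e where e: "e \<in> H" "\<forall>h\<in>H. e * h = h \<and> h * e = h"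
    unfolding maximal_subgroup_def is_subgroup_def by blast
  have g: "grp_one H = e" by (rule grp_one_eqI[OF e])
  interpret cs_idempotent e by unfold_locales (use cs e in auto)
  have "H \<subseteq> He" using e unfolding He_def by auto
  then have "H = He" using m is_subgroup_He unfolding maximal_subgroup_def by blast
  then show "cs_idempotent (grp_one H)" "H = cs_idempotent.He (grp_one H)"
    using g cs_idempotent_axioms by simp_all
qed

context cs_idempotent
begin

section \<open>Rees coordinates\<close>

text \<open>\<open>rho s\<close> and \<open>lam s\<close> play the role of the row and column index of \<open>s\<close> in a Rees matrix
  representation over \<open>He\<close>, normalised by \<open>e * rho s = e\<close> and \<open>lam s * e = e\<close>.\<close>

definition hcoord :: "'a \<Rightarrow> 'a" where "hcoord s = e * s * e"
definition rho :: "'a \<Rightarrow> 'a" where "rho s = s * hinv (hcoord s)"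
definition lam :: "'a \<Rightarrow> 'a" where "lam s = hinv (hcoord s) * s"

lemma hcoord_in_He [simp]: "hcoord s \<in> He"
  unfolding hcoord_def by simp

lemma hcoord_fold: "e * (s * e) = hcoord s" "e * (s * (e * z)) = hcoord s * z"
  unfolding hcoord_def by (simp_all add: mult.assoc)

lemma sandwich_hinv_sandwich: "s * hinv (hcoord s) * s = s"
proof -
  obtain x y where s: "s = x * e * y"
    using completely_simple_sandwich[OF completely_simple] by blast
  have "hcoord s = hcoord x * hcoord y"
    unfolding s hcoord_def by (simp add: mult.assoc e_mult_e_mult)
  then have hinv_s: "hinv (hcoord s) = hinv (hcoord y) * hinv (hcoord x)"
    by (simp add: hinv_mult_distrib)
  have y: "e * (y * (hinv (hcoord y) * z)) = e * z" for z
  proof -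
    have "e * (y * (hinv (hcoord y) * z)) = hcoord y * (hinv (hcoord y) * z)"
      by (simp add: hcoord_fold(2)[symmetric] He_left_assoc)
    then show ?thesis by (simp add: mult_hinv_assoc)
  qed
  have x: "hinv (hcoord x) * (x * (e * z)) = e * z" for z
  proof -
    have "hinv (hcoord x) * (x * (e * z)) = hinv (hcoord x) * (hcoord x * z)"
      by (simp add: hcoord_fold(2)[symmetric] He_right_assoc)
    then show ?thesis by (simp add: hinv_mult_assoc)
  qed
  show ?thesis
    unfolding hinv_s by (simp add: s mult.assoc x y He_left_assoc)
qed

lemma e_mult_rho [simp]: "e * rho s = e"
proof -
  have "e * rho s = hcoord s * hinv (hcoord s)"
    unfolding rho_def by (simp add: hcoord_fold(2)[symmetric] mult.assoc)
  then show ?thesis by simp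
qed

lemma rho_mult_e [simp]: "rho s * e = rho s"
  unfolding rho_def by (simp add: mult.assoc)

lemma e_mult_lam [simp]: "e * lam s = lam s"
  unfolding lam_def by (simp add: mult.assoc[symmetric])

lemma lam_mult_e [simp]: "lam s * e = e"
proof -
  have "lam s * e = hinv (hcoord s) * (e * (s * e))"
    unfolding lam_def by (simp add: mult.assoc He_right_assoc)
  then show ?thesis by (simp add: hcoord_fold)
qed

lemma rees_coord_units_assoc:
  "e * (rho s * z) = e * z" "rho s * (e * z) = rho s * z"
  "e * (lam s * z) = lam s * z" "lam s * (e * z) = e * z"
  by (simp_all add: mult.assoc[symmetric])

lemma mult_e_eq_rho: "s * e = rho s * hcoord s"
  unfolding rho_def by (simp add: mult.assoc hinv_mult_assoc)

lemma e_mult_eq_lam: "e * s = hcoord s * lam s"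
  unfolding lam_def by (simp add: mult_hinv_assoc)

lemma rees_decomp: "rho s * hcoord s * lam s = s"
proof -
  have "rho s * hcoord s * lam s = s * e * lam s" by (simp add: mult_e_eq_rho)
  also have "\<dots> = s * hinv (hcoord s) * s"
    unfolding lam_def by (simp add: mult.assoc He_left_assoc)
  finally show ?thesis by (simp add: sandwich_hinv_sandwich)
qed

lemma rees_coords_eq: "rho s = rho t \<Longrightarrow> lam s = lam t \<Longrightarrow> hcoord s = hcoord t \<Longrightarrow> s = t"
  using rees_decomp by metis

lemma lam_rho_in_He [simp]: "lam s * rho t \<in> He"
  unfolding He_def by (simp add: mult.assoc rees_coord_units_assoc)

lemma hcoord_mult: "hcoord (s * t) = hcoord s * (lam s * rho t) * hcoord t"
proof -
  have "hcoord (s * t) = (e * s) * (t * e)" unfolding hcoord_def by (simp add: mult.assoc)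
  then show ?thesis by (simp add: e_mult_eq_lam mult_e_eq_rho mult.assoc)
qed

lemma rho_eqI:
  assumes k: "k \<in> He" and "e * r = e" "r * e = r" "s * e = r * k"
  shows "rho s = r"
proof -
  have "hcoord s = (e * r) * k" using assms(4) unfolding hcoord_def by (simp add: mult.assoc)
  then have "hcoord s = k" using assms by simp
  then have "rho s = s * e * hinv k" unfolding rho_def using k by (simp add: mult.assoc)
  also have "\<dots> = r" using assms by (simp add: mult.assoc)
  finally show ?thesis .
qed

lemma lam_eqI:
  assumes k: "k \<in> He" and "l * e = e" "e * l = l" "e * s = k * l"
  shows "lam s = l"
proof -
  have "hcoord s = k" using assms unfolding hcoord_def by (simp add: mult.assoc)
  then have "lam s = hinv k * (e * s)" unfolding lam_def using k by (simp add: mult.assoc[symmetric])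
  also have "\<dots> = l" using assms by (simp add: hinv_mult_assoc)
  finally show ?thesis .
qed

lemma rho_mult [simp]: "rho (s * t) = rho s"
proof (rule rho_eqI)
  have "s * t * e = s * (t * e)" by (simp add: mult.assoc)
  also have "\<dots> = (rho s * hcoord s * lam s) * (rho t * hcoord t)"
    by (simp only: rees_decomp mult_e_eq_rho)
  finally show "s * t * e = rho s * (hcoord s * (lam s * rho t) * hcoord t)"
    by (simp add: mult.assoc)
qed simp_all

lemma lam_mult [simp]: "lam (s * t) = lam t"
proof (rule lam_eqI)
  have "e * (s * t) = (e * s) * t" by (simp add: mult.assoc)
  also have "\<dots> = (hcoord s * lam s) * (rho t * hcoord t * lam t)"
    by (simp only: rees_decomp e_mult_eq_lam)
  finally show "e * (s * t) = (hcoord s * (lam s * rho t) * hcoord t) * lam t"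
    by (simp add: mult.assoc)
qed simp_all

lemma hcoord_rees [simp]: "h \<in> He \<Longrightarrow> hcoord (rho s * h * lam t) = h"
  unfolding hcoord_def by (simp add: mult.assoc rees_coord_units_assoc He_left_assoc)

lemma rho_rho [simp]: "rho (rho s) = rho s"
  by (rule rho_eqI[of e]) simp_all

lemma lam_lam [simp]: "lam (lam s) = lam s"
  by (rule lam_eqI[of e]) simp_all

lemma hcoord_mult_lam: "lam s = lam u \<Longrightarrow> hcoord (s * t) = hcoord s * (lam u * rho t * hcoord t)"
  by (simp add: hcoord_mult mult.assoc)

lemma rees_predecessor:
  fixes s t u :: 'a
  assumes "lam s = lam t"
  defines "c \<equiv> rho s * (hcoord s * hinv (lam u * rho t * hcoord t)) * lam u"
  shows "c * t = s" and "lam c = lam u" and "hcoord c = hcoord s * hinv (lam u * rho t * hcoord t)"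
proof -
  define K where "K = lam u * rho t * hcoord t"
  have K: "K \<in> He" unfolding K_def by simp
  show lc: "lam c = lam u" and hc: "hcoord c = hcoord s * hinv K"
    unfolding c_def K_def[symmetric] using K by simp_all
  have "hcoord (c * t) = hcoord s * hinv K * K"
    using hcoord_mult_lam[OF lc, of t] unfolding hc K_def by simp
  also have "\<dots> = hcoord s" using K by (simp add: mult.assoc)
  finally have "hcoord (c * t) = hcoord s" .
  moreover have "rho (c * t) = rho s" unfolding c_def by simp
  ultimately show "c * t = s" using assms(1) by - (rule rees_coords_eq, simp_all)
qed

lemma mon_eval_in_He: "set w \<subseteq> Z \<Longrightarrow> hg ` Z \<subseteq> He \<Longrightarrow> mon_eval (*) e hg w \<in> He"
  by (induction w) auto

lemma mon_eval_append:
  "set u \<subseteq> Z \<Longrightarrow> set v \<subseteq> Z \<Longrightarrow> hg ` Z \<subseteq> He \<Longrightarrow>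
     mon_eval (*) e hg (u @ v) = mon_eval (*) e hg u * mon_eval (*) e hg v"
  by (induction u) (auto simp: mult.assoc mon_eval_in_He)

definition hat_eval :: "(nat \<Rightarrow> 'a) \<Rightarrow> nat list \<Rightarrow> 'a" where
  "hat_eval hg w = foldr (\<lambda>c acc. (if even c then hg (c div 2) else hinv (hg (c div 2))) * acc) w e"

lemma hat_eval_Nil [simp]: "hat_eval hg [] = e"
  and hat_eval_Cons [simp]:
    "hat_eval hg (c # w) = (if even c then hg (c div 2) else hinv (hg (c div 2))) * hat_eval hg w"
  unfolding hat_eval_def by simp_all

lemma hat_eval_in_He: "set w \<subseteq> hat_alphabet Z \<Longrightarrow> hg ` Z \<subseteq> He \<Longrightarrow> hat_eval hg w \<in> He"
  by (induction w) (auto dest!: hat_alphabet_div2)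

lemma hat_eval_double: "hat_eval hg (map (\<lambda>z. 2 * z) zs) = mon_eval (*) e hg zs"
  by (induction zs) auto

lemma loop_path_He_iff:
  assumes gen: "hg ` Z \<subseteq> He"
  shows "loop_path He (*) Z hg a w b \<longleftrightarrow> a \<in> He \<and> set w \<subseteq> hat_alphabet Z \<and> b = a * hat_eval hg w"
proof (induction w arbitrary: a)
  case Nil
  then show ?case by (auto simp: loop_path_Nil_iff)
next
  case (Cons c w)
  show ?case
  proof (cases "even c")
    case True
    then obtain x where "c = 2 * x" by (metis evenE)
    then show ?thesis using Cons gen by (auto simp: loop_path_fwd_iff mult.assoc)
  next
    case False
    then obtain x where c: "c = Suc (2 * x)" by (metis oddE Suc_eq_plus1)
    have "(\<exists>d \<in> He. d * hg x = a \<and> d \<in> He \<and> b = d * hat_eval hg w) \<longleftrightarrow>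
          b = a * (hinv (hg x) * hat_eval hg w)" if "a \<in> He" "x \<in> Z"
    proof -
      have x: "hg x \<in> He" using gen that by auto
      have "d * hg x = a \<longleftrightarrow> d = a * hinv (hg x)" if "d \<in> He" for d
        using x that \<open>a \<in> He\<close> by (auto simp: mult.assoc He_right_assoc)
      with x \<open>a \<in> He\<close> show ?thesis by (auto simp: mult.assoc)
    qed
    then show ?thesis using Cons c by (auto simp: loop_path_bwd_iff)
  qed
qed

lemma loop_problem_He:
  "hg ` Z \<subseteq> He \<Longrightarrow>
     loop_problem He (*) e Z hg = {w. set w \<subseteq> hat_alphabet Z \<and> hat_eval hg w = e}"
  unfolding loop_problem_def by (auto simp: loop_path_He_iff hat_eval_in_He)

lemma word_problem_image_loop_problem:
  assumes gen: "hg ` Z \<subseteq> He"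
  shows "{(map (\<lambda>z. 2 * z) zs, zs) | zs. set zs \<subseteq> Z} `` loop_problem He (*) e Z hg =
           word_problem (*) e Z hg"
proof (intro equalityI subsetI)
  fix v assume "v \<in> word_problem (*) e Z hg"
  then have "(map (\<lambda>z. 2 * z) v, v) \<in> {(map (\<lambda>z. 2 * z) zs, zs) | zs. set zs \<subseteq> Z}"
    and "map (\<lambda>z. 2 * z) v \<in> loop_problem He (*) e Z hg"
    unfolding loop_problem_He[OF gen] word_problem_def by (auto simp: hat_eval_double)
  then show "v \<in> {(map (\<lambda>z. 2 * z) zs, zs) | zs. set zs \<subseteq> Z} `` loop_problem He (*) e Z hg"
    by blast
qed (auto simp: loop_problem_He[OF gen] word_problem_def hat_eval_double)

definition hat_word :: "nat set \<Rightarrow> (nat \<Rightarrow> 'a) \<Rightarrow> nat \<Rightarrow> nat list" where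
  "hat_word Z hg c = (if even c then [c div 2] else rep_word (*) e Z hg (hinv (hg (c div 2))))"

lemma hat_word:
  assumes mg: "mon_generates He (*) e Z hg" and c: "c \<in> hat_alphabet Z"
  shows "set (hat_word Z hg c) \<subseteq> Z"
    and "mon_eval (*) e hg (hat_word Z hg c) = (if even c then hg (c div 2) else hinv (hg (c div 2)))"
proof -
  have "hg (c div 2) \<in> He" using mg hat_alphabet_div2[OF c] unfolding mon_generates_def by blast
  then show "set (hat_word Z hg c) \<subseteq> Z"
    "mon_eval (*) e hg (hat_word Z hg c) = (if even c then hg (c div 2) else hinv (hg (c div 2)))"
    using hat_alphabet_div2[OF c] rep_word[OF mg] unfolding hat_word_def by auto
qed

lemma loop_problem_image_word_problem:
  assumes mg: "mon_generates He (*) e Z hg"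
  shows "{(concat (map (hat_word Z hg) cs), cs) | cs. set cs \<subseteq> hat_alphabet Z} ``
           word_problem (*) e Z hg = loop_problem He (*) e Z hg"
proof -
  have gen: "hg ` Z \<subseteq> He" using mg unfolding mon_generates_def by blast
  let ?\<rho> = "{(concat (map (hat_word Z hg) cs), cs) | cs. set cs \<subseteq> hat_alphabet Z}"
  have hat: "set (concat (map (hat_word Z hg) cs)) \<subseteq> Z \<and>
          mon_eval (*) e hg (concat (map (hat_word Z hg) cs)) = hat_eval hg cs"
    if "set cs \<subseteq> hat_alphabet Z" for cs
    using that by (induction cs) (auto simp: hat_word[OF mg] mon_eval_append[OF _ _ gen])
  show ?thesis
  proof (intro equalityI subsetI)
    fix cs assume "cs \<in> loop_problem He (*) e Z hg"
    then have "(concat (map (hat_word Z hg) cs), cs) \<in> ?\<rho>"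
      and "concat (map (hat_word Z hg) cs) \<in> word_problem (*) e Z hg"
      unfolding loop_problem_He[OF gen] word_problem_def using hat by auto
    then show "cs \<in> ?\<rho> `` word_problem (*) e Z hg" by blast
  next
    fix cs assume "cs \<in> ?\<rho> `` word_problem (*) e Z hg"
    then obtain u where "u \<in> word_problem (*) e Z hg" "set cs \<subseteq> hat_alphabet Z"
      "u = concat (map (hat_word Z hg) cs)" by blast
    then show "cs \<in> loop_problem He (*) e Z hg"
      unfolding loop_problem_He[OF gen] word_problem_def using hat by simp
  qed
qed

lemma loop_problem_He_in_iff_word_problem_in:
  assumes F: "closed_rat_trans F" and mg: "mon_generates He (*) e Z hg"
  shows "loop_problem He (*) e Z hg \<in> F \<longleftrightarrow> word_problem (*) e Z hg \<in> F"
proof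
  have fin: "finite Z" and gen: "hg ` Z \<subseteq> He" using mg unfolding mon_generates_def by auto
  show "word_problem (*) e Z hg \<in> F" if "loop_problem He (*) e Z hg \<in> F"
  proof -
    have "rational_transduction (hat_alphabet Z) Z {(map (\<lambda>z. 2 * z) zs, zs) | zs. set zs \<subseteq> Z}"
      using rational_transduction_star[OF fin, of "\<lambda>z. [2 * z]" "hat_alphabet Z" "\<lambda>z. [z]" Z] by simp
    moreover have "loop_problem He (*) e Z hg \<subseteq> lists (hat_alphabet Z)"
      unfolding loop_problem_He[OF gen] by auto
    ultimately show ?thesis
      using closed_rat_transD[OF F _ finite_hat_alphabet[OF fin] fin that]
      by (subst word_problem_image_loop_problem[OF gen, symmetric]) blast
  qed
  show "loop_problem He (*) e Z hg \<in> F" if "word_problem (*) e Z hg \<in> F"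
  proof -
    have "rational_transduction Z (hat_alphabet Z)
        {(concat (map (hat_word Z hg) cs), cs) | cs. set cs \<subseteq> hat_alphabet Z}"
      using rational_transduction_star[OF finite_hat_alphabet[OF fin], of "hat_word Z hg" Z "\<lambda>c. [c]"]
        hat_word(1)[OF mg] by simp
    moreover have "word_problem (*) e Z hg \<subseteq> lists Z"
      unfolding word_problem_def by auto
    ultimately show ?thesis
      using closed_rat_transD[OF F _ fin finite_hat_alphabet[OF fin] that]
      by (subst loop_problem_image_word_problem[OF mg, symmetric]) blast
  qed
qed

end

section \<open>The loop problem of \<open>S\<^sup>1\<close> as a Kleene closure\<close>

fun sg_eval :: "(nat \<Rightarrow> 'a::semigroup_mult) \<Rightarrow> nat list \<Rightarrow> 'a" where
  "sg_eval g [] = undefined"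
| "sg_eval g [x] = g x"
| "sg_eval g (x # y # w) = g x * sg_eval g (y # w)"

lemma sg_eval_Cons: "w \<noteq> [] \<Longrightarrow> sg_eval g (x # w) = g x * sg_eval g w"
  by (cases w) auto

lemma sg_eval_append: "u \<noteq> [] \<Longrightarrow> v \<noteq> [] \<Longrightarrow> sg_eval g (u @ v) = sg_eval g u * sg_eval g v"
proof (induction u)
  case (Cons x u)
  then show ?case by (cases "u = []") (simp_all add: sg_eval_Cons mult.assoc)
qed simp

lemma mon_eval_adj_mult:
  "mon_eval adj_mult None (Some \<circ> g) w = (if w = [] then None else Some (sg_eval g w))"
proof (induction w)
  case (Cons x w)
  then show ?case by (cases "w = []") (simp_all add: sg_eval_Cons)
qed simp

lemma sg_generates_sg_eval: "sg_generates X g \<Longrightarrow> \<exists>w. w \<noteq> [] \<and> set w \<subseteq> X \<and> sg_eval g w = s"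
  unfolding sg_generates_def mon_eval_adj_mult by (metis option.distinct(1) option.inject)

lemma adj_mult_assoc: "adj_mult (adj_mult a b) c = adj_mult a (adj_mult b c)"
  by (cases a; cases b; cases c) (auto simp: mult.assoc)

abbreviation sg_path :: "nat set \<Rightarrow> (nat \<Rightarrow> 'a::semigroup_mult) \<Rightarrow> 'a \<Rightarrow> nat list \<Rightarrow> 'a \<Rightarrow> bool" where
  "sg_path X g \<equiv> loop_path UNIV (*) X g"

abbreviation adj_path ::
  "nat set \<Rightarrow> (nat \<Rightarrow> 'a::semigroup_mult) \<Rightarrow> 'a option \<Rightarrow> nat list \<Rightarrow> 'a option \<Rightarrow> bool" where
  "adj_path X g \<equiv> loop_path UNIV adj_mult X (\<lambda>x. Some (g x))"

lemma adj_path_of_sg_path: "sg_path X g s u t \<Longrightarrow> adj_path X g (Some s) u (Some t)"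
proof (induction rule: loop_path.induct)
  case (lp_bwd a x c w b)
  then show ?case by (auto simp: loop_path_bwd_iff intro!: exI[of _ "Some c"])
qed (simp_all add: loop_path_Nil_iff loop_path_fwd_iff)

lemma adj_path_from_Some:
  "adj_path X g a w b \<Longrightarrow> a = Some s \<Longrightarrow>
     (\<exists>t. b = Some t \<and> sg_path X g s w t) \<or>
     (\<exists>w1 y w2. y \<in> X \<and> w = w1 @ Suc (2 * y) # w2 \<and> sg_path X g s w1 (g y) \<and> adj_path X g None w2 b)"
proof (induction arbitrary: s rule: loop_path.induct)
  case (lp_nil a)
  then show ?case by (simp add: loop_path_Nil_iff)
next
  case (lp_fwd a x w b)
  then have "(\<exists>t. b = Some t \<and> sg_path X g (s * g x) w t) \<or>
     (\<exists>w1 y w2. y \<in> X \<and> w = w1 @ Suc (2 * y) # w2 \<and> sg_path X g (s * g x) w1 (g y) \<and> adj_path X g None w2 b)"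
    by simp
  then show ?case
  proof (elim disjE exE conjE)
    fix t assume "b = Some t" "sg_path X g (s * g x) w t"
    then show ?thesis using lp_fwd by (intro disjI1) (simp add: loop_path_fwd_iff)
  next
    fix w1 y w2
    assume "y \<in> X" "w = w1 @ Suc (2 * y) # w2" "sg_path X g (s * g x) w1 (g y)" "adj_path X g None w2 b"
    then show ?thesis using lp_fwd
      by (intro disjI2 exI[of _ "2 * x # w1"] exI[of _ y] exI[of _ w2]) (simp add: loop_path_fwd_iff)
  qed
next
  case (lp_bwd a x c w b)
  show ?case
  proof (cases c)
    case None
    then show ?thesis using lp_bwd
      by (intro disjI2 exI[of _ "[]"] exI[of _ x] exI[of _ w]) (simp add: loop_path_Nil_iff)
  next
    case (Some c')
    then have c': "c' * g x = s" using lp_bwd by simp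
    from lp_bwd.IH[OF Some] show ?thesis
    proof (elim disjE exE conjE)
      fix t assume "b = Some t" "sg_path X g c' w t"
      then show ?thesis using lp_bwd c' by (intro disjI1) (auto simp: loop_path_bwd_iff)
    next
      fix w1 y w2
      assume "y \<in> X" "w = w1 @ Suc (2 * y) # w2" "sg_path X g c' w1 (g y)" "adj_path X g None w2 b"
      then show ?thesis using lp_bwd c'
        by (intro disjI2 exI[of _ "Suc (2 * x) # w1"] exI[of _ y] exI[of _ w2]) (auto simp: loop_path_bwd_iff)
    qed
  qed
qed

definition first_returns :: "nat set \<Rightarrow> (nat \<Rightarrow> 'a::semigroup_mult) \<Rightarrow> nat list set" where
  "first_returns X g =
     {[2 * x] @ u @ [Suc (2 * y)] | x y u. x \<in> X \<and> y \<in> X \<and> sg_path X g (g x) u (g y)}"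

lemma first_return_loop: "q \<in> first_returns X g \<Longrightarrow> adj_path X g None q None"
proof -
  assume "q \<in> first_returns X g"
  then obtain x y u where q: "q = [2 * x] @ u @ [Suc (2 * y)]" "x \<in> X" "y \<in> X"
    "sg_path X g (g x) u (g y)" unfolding first_returns_def by blast
  have "adj_path X g (Some (g x)) u (Some (g y))" using adj_path_of_sg_path[OF q(4)] .
  moreover have "adj_path X g (Some (g y)) [Suc (2 * y)] None"
    using q(3) by (auto simp: loop_path_bwd_iff loop_path_Nil_iff intro!: bexI[of _ None])
  ultimately show ?thesis using q(1,2) by (auto simp: loop_path_fwd_iff loop_path_append_iff)
qed

lemma kleene_star_Cons:
  assumes "q \<in> Q" "w \<in> kleene_star Q"
  shows "q @ w \<in> kleene_star Q"
proof -
  obtain ws where "w = concat ws" "set ws \<subseteq> Q" using assms(2) unfolding kleene_star_def by blast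
  then have "q @ w = concat (q # ws) \<and> set (q # ws) \<subseteq> Q" using assms(1) by simp
  then show ?thesis unfolding kleene_star_def by blast
qed

lemma loop_in_kleene_star_first_returns:
  "adj_path X g None w None \<Longrightarrow> w \<in> kleene_star (first_returns X g)"
proof (induction "length w" arbitrary: w rule: less_induct)
  case less
  show ?case
  proof (cases w)
    case Nil
    then show ?thesis unfolding kleene_star_def by (auto intro: exI[of _ "[]"])
  next
    case (Cons c w')
    have "c \<in> hat_alphabet X" using loop_path_hat_alphabet[OF less.prems] Cons by auto
    then show ?thesis
    proof (cases rule: hat_alphabet_cases)
      case (1 x)
      then have "adj_path X g (Some (g x)) w' None" and x: "x \<in> X"
        using less.prems Cons by (auto simp: loop_path_fwd_iff)
      then obtain w1 y w2 where d: "y \<in> X" "w' = w1 @ Suc (2 * y) # w2"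
        "sg_path X g (g x) w1 (g y)" "adj_path X g None w2 None"
        using adj_path_from_Some by blast
      have "w2 \<in> kleene_star (first_returns X g)" using less.hyps[OF _ d(4)] Cons d(2) by simp
      moreover have "[2 * x] @ w1 @ [Suc (2 * y)] \<in> first_returns X g"
        unfolding first_returns_def using d x by blast
      ultimately show ?thesis using Cons d(2) 1 kleene_star_Cons by fastforce
    next
      case (2 x)
      then show ?thesis using less.prems Cons adj_mult.elims by (auto simp: loop_path_bwd_iff)
    qed
  qed
qed

lemma loop_problem_adj_eq_kleene_star:
  "loop_problem UNIV adj_mult None X (Some \<circ> g) = kleene_star (first_returns X g)"
proof (intro equalityI subsetI)
  fix w assume "w \<in> kleene_star (first_returns X g)"
  then obtain ws where "w = concat ws" "set ws \<subseteq> first_returns X g" unfolding kleene_star_def by blast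
  moreover have "set ws \<subseteq> first_returns X g \<Longrightarrow> adj_path X g None (concat ws) None"
  proof (induction ws)
    case (Cons q ws)
    then show ?case using first_return_loop[of q] loop_path_append_iff by fastforce
  qed (simp add: loop_path_Nil_iff)
  ultimately show "w \<in> loop_problem UNIV adj_mult None X (Some \<circ> g)"
    unfolding loop_problem_def comp_def by simp
qed (simp add: loop_problem_def comp_def loop_in_kleene_star_first_returns)

definition fwd_word :: "nat list \<Rightarrow> nat list" where
  "fwd_word w = map (\<lambda>x. 2 * x) w"

definition bwd_word :: "nat list \<Rightarrow> nat list" where
  "bwd_word w = map (\<lambda>x. Suc (2 * x)) (rev w)"

lemma fwd_word_simps [simp]:
  "fwd_word [] = []" "fwd_word (x # w) = 2 * x # fwd_word w" "fwd_word (u @ v) = fwd_word u @ fwd_word v"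
  unfolding fwd_word_def by simp_all

lemma bwd_word_simps [simp]: "bwd_word [] = []" "bwd_word (w @ [x]) = Suc (2 * x) # bwd_word w"
  unfolding bwd_word_def by simp_all

lemma fwd_word_concat: "fwd_word (concat ws) = concat (map fwd_word ws)"
  by (induction ws) auto

lemma set_fwd_word: "set w \<subseteq> X \<Longrightarrow> set (fwd_word w) \<subseteq> hat_alphabet X"
  unfolding fwd_word_def by auto

lemma set_bwd_word: "set w \<subseteq> X \<Longrightarrow> set (bwd_word w) \<subseteq> hat_alphabet X"
  unfolding bwd_word_def by auto

lemma adj_path_fwd_word:
  "adj_path X g a (fwd_word w) b \<longleftrightarrow>
     set w \<subseteq> X \<and> b = (if w = [] then a else adj_mult a (Some (sg_eval g w)))"
proof (induction w arbitrary: a)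
  case (Cons x w)
  then show ?case
    by (cases "w = []") (auto simp: loop_path_fwd_iff loop_path_Nil_iff adj_mult_assoc sg_eval_Cons)
qed (simp add: loop_path_Nil_iff)

lemma adj_path_bwd_word_None:
  "adj_path X g a (bwd_word w) None \<longleftrightarrow>
     (a = None \<and> w = []) \<or> (w \<noteq> [] \<and> set w \<subseteq> X \<and> a = Some (sg_eval g w))"
proof (induction w arbitrary: a rule: rev_induct)
  case (snoc x w)
  have "adj_path X g a (bwd_word (w @ [x])) None \<longleftrightarrow>
          x \<in> X \<and> (\<exists>c. adj_mult c (Some (g x)) = a \<and> adj_path X g c (bwd_word w) None)"
    by (simp add: loop_path_bwd_iff)
  also have "\<dots> \<longleftrightarrow> w @ [x] \<noteq> [] \<and> set (w @ [x]) \<subseteq> X \<and> a = Some (sg_eval g (w @ [x]))"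
    unfolding snoc.IH by (cases a; cases "w = []") (auto simp: sg_eval_append)
  finally show ?case by auto
qed (auto simp: loop_path_Nil_iff)

context cs_idempotent
begin

lemma rho_sg_eval: "w \<noteq> [] \<Longrightarrow> rho (sg_eval g w) = rho (g (hd w))"
proof (induction w)
  case (Cons x w)
  then show ?case by (cases w) auto
qed simp

lemma lam_sg_eval: "w \<noteq> [] \<Longrightarrow> lam (sg_eval g w) = lam (g (last w))"
proof (induction w)
  case (Cons x w)
  then show ?case by (cases w) auto
qed simp

lemma lam_eq_lam_generator: "sg_generates X g \<Longrightarrow> \<exists>z \<in> X. lam c = lam (g z)"
  using sg_generates_sg_eval[of X g c] lam_sg_eval by (metis last_in_set subsetD)

lemma rho_sg_path: "sg_path X g s w t \<Longrightarrow> rho s = rho t"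
  by (induction rule: loop_path.induct) auto

definition He_gens :: "nat set \<Rightarrow> (nat \<Rightarrow> 'a) \<Rightarrow> 'a set" where
  "He_gens X g = (\<lambda>x. hcoord (g x)) ` X \<union> (\<lambda>(x, y). lam (g x) * rho (g y)) ` (X \<times> X)"

lemma finite_He_gens: "finite X \<Longrightarrow> finite (He_gens X g)"
  unfolding He_gens_def by simp

lemma He_gens_subset: "He_gens X g \<subseteq> He"
  unfolding He_gens_def by auto

lemma hcoord_sg_eval_He_gens:
  "w \<noteq> [] \<Longrightarrow> set w \<subseteq> X \<Longrightarrow>
     \<exists>ls. set ls \<subseteq> He_gens X g \<and> foldr (*) ls e = hcoord (sg_eval g w)"
proof (induction w)
  case (Cons x w)
  show ?case
  proof (cases w)
    case Nil
    then show ?thesis using Cons.prems by (intro exI[of _ "[hcoord (g x)]"]) (auto simp: He_gens_def)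
  next
    case (Cons y w')
    then obtain ls where ls: "set ls \<subseteq> He_gens X g" "foldr (*) ls e = hcoord (sg_eval g w)"
      using Cons.IH Cons.prems by auto
    let ?ls = "hcoord (g x) # (lam (g x) * rho (g y)) # ls"
    have "hcoord (sg_eval g (x # w)) = foldr (*) ?ls e"
      using ls(2) rho_sg_eval[of w g] Cons by (simp add: sg_eval_Cons hcoord_mult mult.assoc)
    moreover have "set ?ls \<subseteq> He_gens X g" using ls(1) Cons.prems Cons unfolding He_gens_def by auto
    ultimately show ?thesis by metis
  qed
qed simp

lemma mon_generates_He_gens:
  assumes sg: "sg_generates X g" and gl: "set gl = He_gens X g"
  shows "mon_generates He (*) e {..<length gl} (nth gl)"
  unfolding mon_generates_def
proof (intro conjI ballI)
  have gl': "nth gl ` {..<length gl} = He_gens X g" unfolding gl[symmetric] by (auto simp: set_conv_nth)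
  then show "nth gl ` {..<length gl} \<subseteq> He" using He_gens_subset by simp
  fix m assume "m \<in> He"
  then have m: "hcoord m = m" unfolding He_def hcoord_def by simp
  obtain w where w: "w \<noteq> []" "set w \<subseteq> X" "sg_eval g w = m" using sg_generates_sg_eval[OF sg] by blast
  obtain ls where ls: "set ls \<subseteq> He_gens X g" "foldr (*) ls e = m"
    using hcoord_sg_eval_He_gens[OF w(1,2), where g=g] w(3) m by auto
  from ls(1) have "ls \<in> map (nth gl) ` lists {..<length gl}"
    unfolding lists_image[symmetric] gl' by blast
  then obtain zs where "set zs \<subseteq> {..<length gl}" "ls = map (nth gl) zs" by blast
  moreover have "mon_eval (*) e (nth gl) zs = foldr (*) (map (nth gl) zs) e"
    unfolding mon_eval_def by (simp add: foldr_map comp_def)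
  ultimately show "\<exists>w. set w \<subseteq> {..<length gl} \<and> mon_eval (*) e (nth gl) w = m"
    using ls(2) by metis
qed simp

lemma sg_eval_padded:
  assumes "ue \<noteq> []" "sg_eval g ue = e"
  shows "\<forall>z \<in> set zs. vw z \<noteq> [] \<and> sg_eval g (vw z) = hg z \<and> hg z \<in> He \<Longrightarrow>
           sg_eval g (ue @ concat (map (\<lambda>z. vw z @ ue) zs)) = mon_eval (*) e hg zs"
proof (induction zs)
  case (Cons z zs)
  have "ue @ concat (map (\<lambda>z. vw z @ ue) (z # zs)) = (ue @ vw z) @ (ue @ concat (map (\<lambda>z. vw z @ ue) zs))"
    by simp
  then show ?case using Cons assms by (simp add: sg_eval_append mult.assoc He_left_assoc)
qed (simp add: assms)

lemma padded_loop_iff: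
  assumes ue: "ue \<noteq> []" "set ue \<subseteq> X" "sg_eval g ue = e"
    and vw: "\<forall>z \<in> set zs. vw z \<noteq> [] \<and> set (vw z) \<subseteq> X \<and> sg_eval g (vw z) = hg z \<and> hg z \<in> He"
  shows "fwd_word ue @ concat (map (\<lambda>z. fwd_word (vw z @ ue)) zs) @ bwd_word ue
           \<in> loop_problem UNIV adj_mult None X (Some \<circ> g) \<longleftrightarrow> mon_eval (*) e hg zs = e"
proof -
  define pre where "pre = ue @ concat (map (\<lambda>z. vw z @ ue) zs)"
  have pre: "pre \<noteq> []" "set pre \<subseteq> X" "sg_eval g pre = mon_eval (*) e hg zs"
    unfolding pre_def using ue vw sg_eval_padded[OF ue(1,3)] by auto
  have "fwd_word ue @ concat (map (\<lambda>z. fwd_word (vw z @ ue)) zs) = fwd_word pre"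
    unfolding pre_def by (simp add: fwd_word_concat comp_def)
  then have "fwd_word ue @ concat (map (\<lambda>z. fwd_word (vw z @ ue)) zs) @ bwd_word ue
           \<in> loop_problem UNIV adj_mult None X (Some \<circ> g) \<longleftrightarrow>
        (\<exists>b. adj_path X g None (fwd_word pre) b \<and> adj_path X g b (bwd_word ue) None)"
    unfolding loop_problem_def comp_def by (simp add: loop_path_append_iff flip: append_assoc)
  also have "\<dots> \<longleftrightarrow> adj_path X g (Some (sg_eval g pre)) (bwd_word ue) None"
    using pre by (simp add: adj_path_fwd_word)
  also have "\<dots> \<longleftrightarrow> sg_eval g pre = e" using ue by (simp add: adj_path_bwd_word_None)
  finally show ?thesis using pre(3) by simp
qed

lemma padded_image_loop_problem:
  assumes ue: "ue \<noteq> []" "set ue \<subseteq> X" "sg_eval g ue = e" and hg: "hg ` Z \<subseteq> He"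
    and vw: "\<And>z. vw z \<noteq> [] \<and> set (vw z) \<subseteq> X \<and> sg_eval g (vw z) = hg z"
  shows "{(fwd_word ue @ concat (map (\<lambda>z. fwd_word (vw z @ ue)) zs) @ bwd_word ue, zs) | zs. set zs \<subseteq> Z}
           `` loop_problem UNIV adj_mult None X (Some \<circ> g) = word_problem (*) e Z hg"
proof (intro set_eqI)
  fix zs
  let ?w = "\<lambda>zs. fwd_word ue @ concat (map (\<lambda>z. fwd_word (vw z @ ue)) zs) @ bwd_word ue"
  have "zs \<in> {(?w zs, zs) | zs. set zs \<subseteq> Z} `` loop_problem UNIV adj_mult None X (Some \<circ> g) \<longleftrightarrow>
        set zs \<subseteq> Z \<and> ?w zs \<in> loop_problem UNIV adj_mult None X (Some \<circ> g)"
    by blast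
  also have "\<dots> \<longleftrightarrow> set zs \<subseteq> Z \<and> mon_eval (*) e hg zs = e"
  proof (cases "set zs \<subseteq> Z")
    case True
    then have "\<forall>z \<in> set zs. vw z \<noteq> [] \<and> set (vw z) \<subseteq> X \<and> sg_eval g (vw z) = hg z \<and> hg z \<in> He"
      using vw hg by (auto simp: image_subset_iff)
    from padded_loop_iff[OF ue this] True show ?thesis by simp
  qed simp
  finally show "zs \<in> {(?w zs, zs) | zs. set zs \<subseteq> Z} `` loop_problem UNIV adj_mult None X (Some \<circ> g) \<longleftrightarrow>
      zs \<in> word_problem (*) e Z hg"
    unfolding word_problem_def by simp
qed

lemma ex_mon_generates_He:
  fixes g :: "nat \<Rightarrow> 'a"
  assumes sg: "sg_generates X g"
  shows "\<exists>Z hg. mon_generates He (*) e Z hg"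
proof -
  have "finite X" using sg unfolding sg_generates_def by blast
  then obtain gl where "set gl = He_gens X g" using finite_list[OF finite_He_gens] by blast
  then show ?thesis using mon_generates_He_gens[OF sg] by blast
qed

lemma word_problem_He_in_if_loop_problem_in:
  fixes g :: "nat \<Rightarrow> 'a"
  assumes F: "closed_rat_trans F" and sg: "sg_generates X g"
    and L: "loop_problem UNIV adj_mult None X (Some \<circ> g) \<in> F"
  shows "\<exists>Z hg. mon_generates He (*) e Z hg \<and> word_problem (*) e Z hg \<in> F"
proof -
  have finX: "finite X" using sg unfolding sg_generates_def by blast
  obtain Z hg where mg: "mon_generates He (*) e Z hg" using ex_mon_generates_He[OF sg] by blast
  then have finZ: "finite Z" and hg: "hg ` Z \<subseteq> He" unfolding mon_generates_def by auto
  obtain ue where ue: "ue \<noteq> []" "set ue \<subseteq> X" "sg_eval g ue = e"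
    using sg_generates_sg_eval[OF sg] by blast
  define vw where "vw z = (SOME w. w \<noteq> [] \<and> set w \<subseteq> X \<and> sg_eval g w = hg z)" for z
  have vw: "vw z \<noteq> [] \<and> set (vw z) \<subseteq> X \<and> sg_eval g (vw z) = hg z" for z
    unfolding vw_def by (rule someI_ex) (rule sg_generates_sg_eval[OF sg])
  let ?\<rho> = "{(fwd_word ue @ concat (map (\<lambda>z. fwd_word (vw z @ ue)) zs) @ bwd_word ue, zs)
               | zs. set zs \<subseteq> Z}"
  have labels: "set (fwd_word (vw z @ ue)) \<subseteq> hat_alphabet X \<and> set [z] \<subseteq> Z" if "z \<in> Z" for z
    using that vw[of z] ue(2) by (intro conjI set_fwd_word) simp_all
  have rt: "rational_transduction (hat_alphabet X) Z ?\<rho>"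
    using rational_transduction_bracketed[OF finZ set_fwd_word[OF ue(2)] set_bwd_word[OF ue(2)],
        of "[]" Z "[]" "\<lambda>z. fwd_word (vw z @ ue)" "\<lambda>z. [z]"] labels
    by (simp del: fwd_word_simps)
  have sub: "loop_problem UNIV adj_mult None X (Some \<circ> g) \<subseteq> lists (hat_alphabet X)"
    unfolding loop_problem_def by (auto dest: loop_path_hat_alphabet)
  have "word_problem (*) e Z hg \<in> F"
    using closed_rat_transD[OF F rt finite_hat_alphabet[OF finX] finZ L sub]
    unfolding padded_image_loop_problem[OF ue hg vw] .
  with mg show ?thesis by blast
qed

end

section \<open>From the word problem of \<open>He\<close> to the loop problem of \<open>S\<close>\<close>

definition pair_state :: "nat \<Rightarrow> nat \<Rightarrow> nat" where
  "pair_state y z = 2 + prod_encode (y, z)"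

lemma pair_state_eq_iff [simp]: "pair_state a b = pair_state c d \<longleftrightarrow> a = c \<and> b = d"
  unfolding pair_state_def using prod_encode_eq by auto

lemma pair_state_neq [simp]:
  "pair_state y z \<noteq> 0" "0 \<noteq> pair_state y z" "pair_state y z \<noteq> Suc 0" "Suc 0 \<noteq> pair_state y z"
  unfolding pair_state_def by simp_all

locale cs_generators = cs_idempotent e for e :: "'a::semigroup_mult" +
  fixes X :: "nat set" and g :: "nat \<Rightarrow> 'a" and Z :: "nat set" and hg :: "nat \<Rightarrow> 'a"
  assumes sg_generates: "sg_generates X g"
    and mon_generates: "mon_generates He (*) e Z hg"
begin

abbreviation heval :: "nat list \<Rightarrow> 'a" where "heval \<equiv> mon_eval (*) e hg"
abbreviation hword :: "'a \<Rightarrow> nat list" where "hword \<equiv> rep_word (*) e Z hg"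

lemma finite_X: "finite X" and finite_Z: "finite Z" and hg_in_He: "hg ` Z \<subseteq> He"
  using sg_generates mon_generates unfolding sg_generates_def mon_generates_def by auto

lemma set_hword: "x \<in> set (hword h) \<Longrightarrow> h \<in> He \<Longrightarrow> x \<in> Z"
  using rep_word(1)[OF mon_generates] by blast

lemma heval_hword_append: "h \<in> He \<Longrightarrow> set u \<subseteq> Z \<Longrightarrow> heval (hword h @ u) = h * heval u"
  using mon_eval_append[OF rep_word(1)[OF mon_generates] _ hg_in_He] rep_word(2)[OF mon_generates]
  by simp

lemma heval_in_He: "set u \<subseteq> Z \<Longrightarrow> heval u \<in> He"
  using mon_eval_in_He[OF _ hg_in_He] .

text \<open>By \<open>hcoord_mult_lam\<close>, \<open>hcoord (s * g w) = hcoord s * step_factor z w\<close> whenever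
  \<open>lam s = lam (g z)\<close>.\<close>

definition step_factor :: "nat \<Rightarrow> nat \<Rightarrow> 'a" where
  "step_factor z w = lam (g z) * rho (g w) * hcoord (g w)"

lemma step_factor_in_He [simp]: "step_factor z w \<in> He"
  unfolding step_factor_def by simp

text \<open>Besides the initial state \<open>0\<close> and the final state \<open>1\<close>, the state \<open>pair_state y z\<close>
  records the letter \<open>y\<close> whose inverse has to close the loop and a letter \<open>z\<close> with
  \<open>lam (g z) = lam s\<close> for the current element \<open>s\<close>. Along a run the input read so far
  evaluates to \<open>hcoord s\<close>, and the final edge reads \<open>hinv (hcoord (g y))\<close>; so the input lies
  in the word problem exactly when the loop returns to \<open>g y\<close>.\<close>

definition transducer_edges :: "(nat \<times> nat list \<times> nat list \<times> nat) set" where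
  "transducer_edges =
     {(0, hword (hcoord (g x)), [2 * x], pair_state y x) | x y.
        x \<in> X \<and> y \<in> X \<and> rho (g x) = rho (g y)}
   \<union> {(pair_state y z, hword (step_factor z w), [2 * w], pair_state y w) | y z w.
        y \<in> X \<and> z \<in> X \<and> w \<in> X}
   \<union> {(pair_state y z, hword (hinv (step_factor z' w)), [Suc (2 * w)], pair_state y z') | y z w z'.
        y \<in> X \<and> z \<in> X \<and> w \<in> X \<and> z' \<in> X \<and> lam (g z) = lam (g w)}
   \<union> {(pair_state y z, hword (hinv (hcoord (g y))), [Suc (2 * y)], 1) | y z.
        y \<in> X \<and> z \<in> X \<and> lam (g z) = lam (g y)}"

lemma finite_transducer_edges: "finite transducer_edges"
proof -
  have "transducer_edges \<subseteq>
      (\<lambda>(x, y). (0, hword (hcoord (g x)), [2 * x], pair_state y x)) ` (X \<times> X)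
    \<union> (\<lambda>(y, z, w). (pair_state y z, hword (step_factor z w), [2 * w], pair_state y w)) ` (X \<times> X \<times> X)
    \<union> (\<lambda>(y, z, w, z'). (pair_state y z, hword (hinv (step_factor z' w)), [Suc (2 * w)], pair_state y z'))
        ` (X \<times> X \<times> X \<times> X)
    \<union> (\<lambda>(y, z). (pair_state y z, hword (hinv (hcoord (g y))), [Suc (2 * y)], 1)) ` (X \<times> X)"
    unfolding transducer_edges_def by (auto simp: image_iff)
  then show ?thesis by (rule finite_subset) (simp add: finite_X)
qed

lemma transducer_edge_labels:
  "(p, a, b, q) \<in> transducer_edges \<Longrightarrow> set a \<subseteq> Z \<and> set b \<subseteq> hat_alphabet X"
  unfolding transducer_edges_def by (auto dest!: set_hword)

lemma transducer_edge_from_0: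
  "(0, a, b, q) \<in> transducer_edges \<Longrightarrow>
     \<exists>x y. x \<in> X \<and> y \<in> X \<and> rho (g x) = rho (g y) \<and>
       a = hword (hcoord (g x)) \<and> b = [2 * x] \<and> q = pair_state y x"
  unfolding transducer_edges_def by auto

lemma transducer_edge_from_pair_state:
  assumes "(pair_state y z, a, b, q) \<in> transducer_edges"
  obtains (fwd) w where "w \<in> X" "a = hword (step_factor z w)" "b = [2 * w]" "q = pair_state y w"
  | (bwd) w z' where "w \<in> X" "z' \<in> X" "lam (g z) = lam (g w)" "a = hword (hinv (step_factor z' w))"
      "b = [Suc (2 * w)]" "q = pair_state y z'"
  | (final) "a = hword (hinv (hcoord (g y)))" "b = [Suc (2 * y)]" "q = 1" "lam (g z) = lam (g y)"
  using assms unfolding transducer_edges_def by auto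

lemma tpath_from_final: "tpath transducer_edges 1 u v r \<Longrightarrow> u = [] \<and> v = []"
proof -
  have "(1, a, b, q) \<notin> transducer_edges" for a b q unfolding transducer_edges_def by auto
  then show "tpath transducer_edges 1 u v r \<Longrightarrow> u = [] \<and> v = []"
    using tpath_final_state[of 1 transducer_edges u v r] by blast
qed

lemma tpath_input: "tpath transducer_edges p u v r \<Longrightarrow> set u \<subseteq> Z"
  by (induction rule: tpath.induct) (auto dest: transducer_edge_labels)

lemma transducer_sound:
  "tpath transducer_edges p u v r \<Longrightarrow> r = 1 \<Longrightarrow> p = pair_state y z \<Longrightarrow> y \<in> X \<Longrightarrow>
     lam s = lam (g z) \<Longrightarrow> rho s = rho (g y) \<Longrightarrow> hcoord s * heval u = e \<Longrightarrow>
     \<exists>out. v = out @ [Suc (2 * y)] \<and> sg_path X g s out (g y)"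
proof (induction arbitrary: z s rule: tpath.induct)
  case (tpath_step p a b q u v r)
  have u: "set u \<subseteq> Z" using tpath_input[OF tpath_step.hyps(2)] .
  from tpath_step.hyps(1)[unfolded tpath_step.prems(2)] show ?case
  proof (cases rule: transducer_edge_from_pair_state)
    case (fwd w)
    have "hcoord (s * g w) = hcoord s * step_factor z w"
      unfolding step_factor_def by (rule hcoord_mult_lam[OF tpath_step.prems(4)])
    moreover have "heval (a @ u) = step_factor z w * heval u" using fwd u by (simp add: heval_hword_append)
    ultimately have "hcoord (s * g w) * heval u = hcoord s * heval (a @ u)"
      by (simp add: mult.assoc)
    then obtain out where "v = out @ [Suc (2 * y)]" "sg_path X g (s * g w) out (g y)"
      using tpath_step.IH[of w "s * g w"] tpath_step.prems fwd by auto
    then show ?thesis using fwd by (intro exI[of _ "2 * w # out"]) (simp add: loop_path_fwd_iff)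
  next
    case (bwd w z')
    have lam_s: "lam s = lam (g w)" using bwd tpath_step.prems by simp
    define c where "c = rho s * (hcoord s * hinv (lam (g z') * rho (g w) * hcoord (g w))) * lam (g z')"
    note c = rees_predecessor[OF lam_s, of "g z'", folded c_def step_factor_def]
    have "hcoord c * heval u = hcoord s * heval (a @ u)"
      using bwd u c(3) by (simp add: heval_hword_append mult.assoc)
    moreover have "rho c = rho s" using c(1) rho_mult by metis
    ultimately obtain out where "v = out @ [Suc (2 * y)]" "sg_path X g c out (g y)"
      using tpath_step.IH[of z' c] tpath_step.prems bwd c(2) by auto
    then show ?thesis using bwd c(1) by (intro exI[of _ "Suc (2 * w) # out"]) (auto simp: loop_path_bwd_iff)
  next
    case final
    then have uv: "u = []" "v = []" using tpath_from_final tpath_step.hyps(2) by auto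
    then have "hcoord s * hinv (hcoord (g y)) = e"
      using final tpath_step.prems heval_hword_append[of "hinv (hcoord (g y))" "[]"] by simp
    then have "s = g y"
      using final tpath_step.prems by - (rule rees_coords_eq, simp_all add: mult_hinv_eq_e_iff)
    then show ?thesis using uv final by (intro exI[of _ "[]"]) (simp add: loop_path_Nil_iff)
  qed
qed simp

lemma transducer_complete:
  "sg_path X g s w t \<Longrightarrow> t = g y \<Longrightarrow> y \<in> X \<Longrightarrow> z \<in> X \<Longrightarrow> lam (g z) = lam s \<Longrightarrow>
     \<exists>u. tpath transducer_edges (pair_state y z) u (w @ [Suc (2 * y)]) 1 \<and> hcoord s * heval u = e"
proof (induction arbitrary: z rule: loop_path.induct)
  case (lp_nil s)
  define u where "u = hword (hinv (hcoord (g y)))"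
  have "(pair_state y z, u, [Suc (2 * y)], 1) \<in> transducer_edges"
    unfolding transducer_edges_def u_def using lp_nil by auto
  then have "tpath transducer_edges (pair_state y z) u [Suc (2 * y)] 1"
    using tpath_step[OF _ tpath_nil] by fastforce
  moreover have "hcoord s * heval u = e"
    unfolding u_def using lp_nil heval_hword_append[of _ "[]"] by simp
  ultimately show ?case by auto
next
  case (lp_fwd s x w t)
  obtain u' where u': "tpath transducer_edges (pair_state y x) u' (w @ [Suc (2 * y)]) 1"
    "hcoord (s * g x) * heval u' = e"
    using lp_fwd.IH[of x] lp_fwd.prems lp_fwd.hyps by auto
  have edge: "(pair_state y z, hword (step_factor z x), [2 * x], pair_state y x) \<in> transducer_edges"
    unfolding transducer_edges_def using lp_fwd by auto
  have "tpath transducer_edges (pair_state y z) (hword (step_factor z x) @ u')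
      ((2 * x # w) @ [Suc (2 * y)]) 1"
    using tpath_step[OF edge u'(1)] by simp
  moreover have "hcoord s * heval (hword (step_factor z x) @ u') = e"
  proof -
    have "hcoord (s * g x) = hcoord s * step_factor z x"
      unfolding step_factor_def by (rule hcoord_mult_lam) (use lp_fwd.prems in simp)
    then show ?thesis using u'(2) tpath_input[OF u'(1)] by (simp add: heval_hword_append mult.assoc)
  qed
  ultimately show ?case by blast
next
  case (lp_bwd s x c w t)
  obtain z' where z': "z' \<in> X" "lam c = lam (g z')" using lam_eq_lam_generator[OF sg_generates] by blast
  obtain u' where u': "tpath transducer_edges (pair_state y z') u' (w @ [Suc (2 * y)]) 1"
    "hcoord c * heval u' = e"
    using lp_bwd.IH[of z'] lp_bwd.prems z' by auto
  have "lam (g z) = lam (g x)" using lp_bwd.prems lp_bwd.hyps(4) lam_mult[of c "g x"] by simp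
  then have edge: "(pair_state y z, hword (hinv (step_factor z' x)), [Suc (2 * x)], pair_state y z')
      \<in> transducer_edges"
    unfolding transducer_edges_def using lp_bwd z' by auto
  have "tpath transducer_edges (pair_state y z) (hword (hinv (step_factor z' x)) @ u')
      ((Suc (2 * x) # w) @ [Suc (2 * y)]) 1"
    using tpath_step[OF edge u'(1)] by simp
  moreover have "hcoord s * heval (hword (hinv (step_factor z' x)) @ u') = e"
  proof -
    have "hcoord s = hcoord c * step_factor z' x"
      unfolding step_factor_def lp_bwd.hyps(4)[symmetric] by (rule hcoord_mult_lam[OF z'(2)])
    then show ?thesis using u'(2) tpath_input[OF u'(1)]
      by (simp add: heval_hword_append mult.assoc mult_hinv_assoc heval_in_He)
  qed
  ultimately show ?case by auto
qed

lemma transducer_image_word_problem: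
  "{(u, v). \<exists>t \<in> {1}. tpath transducer_edges 0 u v t} `` word_problem (*) e Z hg = first_returns X g"
proof (intro equalityI subsetI)
  fix q assume "q \<in> {(u, v). \<exists>t \<in> {1}. tpath transducer_edges 0 u v t} `` word_problem (*) e Z hg"
  then obtain u where u: "u \<in> word_problem (*) e Z hg" "tpath transducer_edges 0 u q 1" by auto
  from u(2) show "q \<in> first_returns X g"
  proof (cases rule: tpath.cases)
    case (tpath_step a b p u' v')
    obtain x y where xy: "x \<in> X" "y \<in> X" "rho (g x) = rho (g y)" "a = hword (hcoord (g x))"
      "b = [2 * x]" "p = pair_state y x"
      using transducer_edge_from_0[OF tpath_step(3)] by blast
    have "hcoord (g x) * heval u' = e"
      using u(1) tpath_step xy tpath_input[OF tpath_step(4)]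
      unfolding word_problem_def by (simp add: heval_hword_append)
    then obtain out where "v' = out @ [Suc (2 * y)]" "sg_path X g (g x) out (g y)"
      using transducer_sound[OF tpath_step(4) refl xy(6) xy(2) refl xy(3)] by blast
    then show ?thesis unfolding first_returns_def using tpath_step xy by auto
  qed simp
next
  fix q assume "q \<in> first_returns X g"
  then obtain x y w where q: "q = [2 * x] @ w @ [Suc (2 * y)]" "x \<in> X" "y \<in> X" "sg_path X g (g x) w (g y)"
    unfolding first_returns_def by blast
  obtain u' where u': "tpath transducer_edges (pair_state y x) u' (w @ [Suc (2 * y)]) 1"
    "hcoord (g x) * heval u' = e"
    using transducer_complete[OF q(4) refl q(3) q(2) refl] by blast
  have edge: "(0, hword (hcoord (g x)), [2 * x], pair_state y x) \<in> transducer_edges"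
    unfolding transducer_edges_def using q rho_sg_path[OF q(4)] by auto
  have t: "tpath transducer_edges 0 (hword (hcoord (g x)) @ u') q 1"
    using tpath_step[OF edge u'(1)] q(1) by simp
  moreover have "hword (hcoord (g x)) @ u' \<in> word_problem (*) e Z hg"
    unfolding word_problem_def using tpath_input[OF t] u'(2) tpath_input[OF u'(1)]
    by (simp add: heval_hword_append)
  ultimately show "q \<in> {(u, v). \<exists>t \<in> {1}. tpath transducer_edges 0 u v t} `` word_problem (*) e Z hg"
    by blast
qed

lemma loop_problem_in_if_word_problem_He_in:
  assumes F: "closed_rat_trans F" and K: "closed_kleene F" and W: "word_problem (*) e Z hg \<in> F"
  shows "loop_problem UNIV adj_mult None X (Some \<circ> g) \<in> F"
proof -
  have rt: "rational_transduction Z (hat_alphabet X)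
      {(u, v). \<exists>t \<in> {1}. tpath transducer_edges 0 u v t}"
    unfolding rational_transduction_def
  proof (intro exI[of _ transducer_edges] exI[of _ 0] exI[of _ "{1}"] conjI)
    show "\<forall>(p, a, b, q) \<in> transducer_edges. set a \<subseteq> Z \<and> set b \<subseteq> hat_alphabet X"
      using transducer_edge_labels by blast
  qed (simp_all add: finite_transducer_edges)
  have "word_problem (*) e Z hg \<subseteq> lists Z" unfolding word_problem_def by auto
  from closed_rat_transD[OF F rt finite_Z finite_hat_alphabet[OF finite_X] W this]
  have "first_returns X g \<in> F" unfolding transducer_image_word_problem .
  then show ?thesis
    using K unfolding closed_kleene_def loop_problem_adj_eq_kleene_star by blast
qed

end

lemma maximal_subgroup_loop_problem_iff_word_problem:
  assumes "closed_rat_trans F" "completely_simple TYPE('a::semigroup_mult)"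
    and "maximal_subgroup (H::'a set)"
  shows "(\<exists>X g. mon_generates H (*) (grp_one H) X g \<and> loop_problem H (*) (grp_one H) X g \<in> F) \<longleftrightarrow>
         (\<exists>X g. mon_generates H (*) (grp_one H) X g \<and> word_problem (*) (grp_one H) X g \<in> F)"
  using cs_idempotent.loop_problem_He_in_iff_word_problem_in[OF maximal_subgroup_eq_He(1)[OF assms(2,3)]
      assms(1)]
  unfolding maximal_subgroup_eq_He(2)[OF assms(2,3), symmetric] by blast

lemma maximal_subgroup_word_problem_in_if_loop_problem_in:
  fixes g :: "nat \<Rightarrow> 'a::semigroup_mult"
  assumes "closed_rat_trans F" "completely_simple TYPE('a)" "maximal_subgroup (H :: 'a set)"
    and "sg_generates X g" "loop_problem UNIV adj_mult None X (Some \<circ> g) \<in> F"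
  shows "\<exists>Z hg. mon_generates H (*) (grp_one H) Z hg \<and> word_problem (*) (grp_one H) Z hg \<in> F"
  using cs_idempotent.word_problem_He_in_if_loop_problem_in[OF maximal_subgroup_eq_He(1)[OF assms(2,3)]
      assms(1,4,5)]
  unfolding maximal_subgroup_eq_He(2)[OF assms(2,3), symmetric] .

lemma loop_problem_in_if_maximal_subgroup_word_problem_in:
  assumes F: "closed_rat_trans F" "closed_kleene F"
    and cs: "completely_simple TYPE('a::semigroup_mult)" and sg: "sg_generates X (g :: nat \<Rightarrow> 'a)"
    and W: "\<forall>H :: 'a set. maximal_subgroup H \<longrightarrow>
              (\<exists>Z hg. mon_generates H (*) (grp_one H) Z hg \<and> word_problem (*) (grp_one H) Z hg \<in> F)"
  shows "loop_problem UNIV adj_mult None X (Some \<circ> g) \<in> F"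
proof -
  obtain e :: 'a where "primitive_idempotent e" using cs unfolding completely_simple_def by blast
  then have "e * e = e" unfolding primitive_idempotent_def by blast
  with cs interpret cs_idempotent e by unfold_locales
  obtain Z hg where "mon_generates He (*) e Z hg" "word_problem (*) e Z hg \<in> F"
    using W[rule_format, OF maximal_subgroup_He] unfolding grp_one_He by blast
  then interpret cs_generators e X g Z hg using sg by unfold_locales
  show ?thesis by (rule loop_problem_in_if_word_problem_He_in) fact+
qed

theorem theorem5p6:
  fixes F :: "nat list set set"
  assumes "closed_rat_trans F"
    and "closed_kleene F"
    and "completely_simple TYPE('a::semigroup_mult)"
    and "finitely_generated TYPE('a)"
  shows "((\<exists>X (g :: nat \<Rightarrow> 'a). sg_generates X g \<and>
              loop_problem UNIV adj_mult None X (Some \<circ> g) \<in> F)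
          \<longleftrightarrow>
          (\<forall>H :: 'a set. maximal_subgroup H \<longrightarrow>
              (\<exists>X g. mon_generates H (*) (grp_one H) X g \<and>
                     loop_problem H (*) (grp_one H) X g \<in> F)))
       \<and> ((\<forall>H :: 'a set. maximal_subgroup H \<longrightarrow>
              (\<exists>X g. mon_generates H (*) (grp_one H) X g \<and>
                     loop_problem H (*) (grp_one H) X g \<in> F))
          \<longleftrightarrow>
          (\<forall>H :: 'a set. maximal_subgroup H \<longrightarrow>
              (\<exists>X g. mon_generates H (*) (grp_one H) X g \<and>
                     word_problem (*) (grp_one H) X g \<in> F)))"
proof -
  note F = assms(1,2) and cs = assms(3)
  obtain X0 and g0 :: "nat \<Rightarrow> 'a" where sg0: "sg_generates X0 g0"
    using assms(4) unfolding finitely_generated_def by blast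
  have ii_iii: "(\<forall>H :: 'a set. maximal_subgroup H \<longrightarrow>
              (\<exists>X g. mon_generates H (*) (grp_one H) X g \<and> loop_problem H (*) (grp_one H) X g \<in> F))
      \<longleftrightarrow> (\<forall>H :: 'a set. maximal_subgroup H \<longrightarrow>
              (\<exists>X g. mon_generates H (*) (grp_one H) X g \<and> word_problem (*) (grp_one H) X g \<in> F))"
    using maximal_subgroup_loop_problem_iff_word_problem[OF F(1) cs] by blast
  have i_iii: "(\<exists>X (g :: nat \<Rightarrow> 'a). sg_generates X g \<and> loop_problem UNIV adj_mult None X (Some \<circ> g) \<in> F)
      \<longleftrightarrow> (\<forall>H :: 'a set. maximal_subgroup H \<longrightarrow>
              (\<exists>X g. mon_generates H (*) (grp_one H) X g \<and> word_problem (*) (grp_one H) X g \<in> F))"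
    using maximal_subgroup_word_problem_in_if_loop_problem_in[OF F(1) cs]
      loop_problem_in_if_maximal_subgroup_word_problem_in[OF F cs sg0] sg0 by blast
  show ?thesis using ii_iii i_iii by blast
qed

end
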